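(* Let $m\ge 0$ and $Z\ge 1$ be integers and let $\gamma,\kappa\ge 2$ be integers with $\gamma\kappa>\gamma+\kappa$. Consider pairs $(\mathbf P,\mathbf L)$ with $\mathbf P\in\{0,\ldots,m\}^{\gamma\times\kappa}$ and $\mathbf L\in\mathbb{Z}_Z^{\gamma\times\kappa}$. For $1\le i_1<i_2\le\gamma$ and $1\le j_1<j_2\le\kappa$, call $(i_1,i_2,j_1,j_2)$ active under $(\mathbf P,\mathbf L)$ if $\mathbf P(i_1,j_1)+\mathbf P(i_2,j_2)=\mathbf P(i_1,j_2)+\mathbf P(i_2,j_1)$ and $\mathbf L(i_1,j_1)+\mathbf L(i_2,j_2)\equiv\mathbf L(i_1,j_2)+\mathbf L(i_2,j_1)\pmod Z$. Call two pairs $(\mathbf P,\mathbf L)$, $(\mathbf P',\mathbf L')$ equivalent if there exist a permutation $\pi_r$ of $[\gamma]$ and a permutation $\pi_c$ of $[\kappa]$ such that $\mathbf P'(\pi_r(i),\pi_c(j))=\mathbf P(i,j)$ and $\mathbf L'(\pi_r(i),\pi_c(j))=\mathbf L(i,j)$ for all $i,j$. Let $N_N$ be the number of equivalence classes of pairs under which no 4-cycle candidate is active. Let $\Delta=(2\gamma-3)(2\kappa-3)$, $I=\frac{(\Delta-1)^{\Delta-1}}{\Delta^{\Delta}}$, $II=\frac{27}{256(\gamma\kappa-\gamma-\kappa)}$. If $\frac{2m^2+4m+3}{3(m+1)^3Z}\le\max\{I,II\}$, then $$N_N\ \ge\ \begin{cases}\dfrac{[Z(m+1)]^{\gamma\kappa}\left(1-\frac{2}{\Delta}\right)^{\binom{\gamma}{2}\binom{\kappa}{2}}}{\gamma!\,\kappa!},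 & \text{if } I>II,\\[8pt] \dfrac{[Z(m+1)]^{\gamma\kappa}\left(1-\frac{\gamma\kappa-\gamma-\kappa+1}{4(\gamma\kappa-\gamma-\kappa)}\right)^{\gamma\kappa}}{\gamma!\,\kappa!}, & \text{otherwise.}\end{cases}$$
   Context: Setting: uniform edge spreading (partition matrix $\mathbf P$, memory $m$) and uniform $Z$-lifting (lifting matrix $\mathbf L$) of the all-ones $\gamma\times\kappa$ base matrix; the activation conditions are those for a base-graph 4-cycle to survive spreading and lifting. *)

theory Defs
  imports "HOL-Analysis.Analysis" "HOL-Combinatorics.Permutations"
begin

text \<open>Matrices are functions nat => nat => nat, indices 0-based (row i < gamma, column j < kappa),
  made extensional (value 0 outside the index range) so that the set of pairs is finite.
  Entries of L represent elements of Z_Z by their residues 0..Z-1.\<close>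

definition pairs :: "nat \<Rightarrow> nat \<Rightarrow> nat \<Rightarrow> nat \<Rightarrow>
    ((nat \<Rightarrow> nat \<Rightarrow> nat) \<times> (nat \<Rightarrow> nat \<Rightarrow> nat)) set" where
  "pairs g k m Z = {(P, L). \<forall>i j.
      (i < g \<and> j < k \<longrightarrow> P i j \<le> m \<and> L i j < Z) \<and>
      (\<not> (i < g \<and> j < k) \<longrightarrow> P i j = 0 \<and> L i j = 0)}"

definition active :: "nat \<Rightarrow> (nat \<Rightarrow> nat \<Rightarrow> nat) \<Rightarrow> (nat \<Rightarrow> nat \<Rightarrow> nat) \<Rightarrow>
    nat \<Rightarrow> nat \<Rightarrow> nat \<Rightarrow> nat \<Rightarrow> bool" where
  "active Z P L i1 i2 j1 j2 \<longleftrightarrow>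
     P i1 j1 + P i2 j2 = P i1 j2 + P i2 j1 \<and>
     (L i1 j1 + L i2 j2) mod Z = (L i1 j2 + L i2 j1) mod Z"

definition no_active_pairs :: "nat \<Rightarrow> nat \<Rightarrow> nat \<Rightarrow> nat \<Rightarrow>
    ((nat \<Rightarrow> nat \<Rightarrow> nat) \<times> (nat \<Rightarrow> nat \<Rightarrow> nat)) set" where
  "no_active_pairs g k m Z = {(P, L) \<in> pairs g k m Z.
      \<forall>i1 i2 j1 j2. i1 < i2 \<and> i2 < g \<and> j1 < j2 \<and> j2 < k \<longrightarrow>
        \<not> active Z P L i1 i2 j1 j2}"

definition pair_equiv :: "nat \<Rightarrow> nat \<Rightarrow> nat \<Rightarrow> nat \<Rightarrow>
    (((nat \<Rightarrow> nat \<Rightarrow> nat) \<times> (nat \<Rightarrow> nat \<Rightarrow> nat)) \<times>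
     ((nat \<Rightarrow> nat \<Rightarrow> nat) \<times> (nat \<Rightarrow> nat \<Rightarrow> nat))) set" where
  "pair_equiv g k m Z = {((P, L), (P', L')).
      (P, L) \<in> pairs g k m Z \<and> (P', L') \<in> pairs g k m Z \<and>
      (\<exists>pr pc. pr permutes {..<g} \<and> pc permutes {..<k} \<and>
         (\<forall>i<g. \<forall>j<k. P' (pr i) (pc j) = P i j \<and> L' (pr i) (pc j) = L i j))}"

definition N_N :: "nat \<Rightarrow> nat \<Rightarrow> nat \<Rightarrow> nat \<Rightarrow> nat" where
  "N_N g k m Z = card (no_active_pairs g k m Z // pair_equiv g k m Z)"

end

theory Submission
  imports Defs "HOL-Number_Theory.Cong"
begin

text \<open>
  Fill the entries of (P, L) one at a time in row-major order. When entry (i, j) is chosen, every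
  candidate (i1, i, j1, j) with i1 < i and j1 < j already has its other three entries fixed, and it
  becomes active for at most one of the Z (m + 1) values of the new entry. Hence at least the
  product of Z (m + 1) - i j over all cells counts pairs without active candidates, and an
  equivalence class contains at most gamma! kappa! of them. Of the hypothesis only the consequence
  2 / (3 Z (m + 1)) <= max I II is used: it makes Z (m + 1) large compared with Delta, resp.
  gamma kappa - gamma - kappa, so that every factor Z (m + 1) - i j is at least
  Z (m + 1) (1 - 2 / Delta) ^ (i j), resp. Z (m + 1) times the base of the second bound.
\<close>

lemma finite_bounded_matrices:
  "finite {P :: nat \<Rightarrow> nat \<Rightarrow> nat. \<forall>i j.
      (i < g \<and> j < k \<longrightarrow> P i j \<le> c) \<and> (\<not> (i < g \<and> j < k) \<longrightarrow> P i j = 0)}"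
proof -
  define Row where "Row = {r :: nat \<Rightarrow> nat. \<forall>j. (j \<in> {..<k} \<longrightarrow> r j \<in> {..c}) \<and> (j \<notin> {..<k} \<longrightarrow> r j = 0)}"
  have "finite Row"
    unfolding Row_def by (rule finite_set_of_finite_funs) auto
  then have "finite {P. \<forall>i. (i \<in> {..<g} \<longrightarrow> P i \<in> Row) \<and> (i \<notin> {..<g} \<longrightarrow> P i = (\<lambda>_. 0))}"
    by (intro finite_set_of_finite_funs) auto
  then show ?thesis
    by (rule finite_subset[rotated]) (auto simp: Row_def)
qed

lemma finite_pairs: "finite (pairs g k m Z)"
proof -
  let ?M = "{P :: nat \<Rightarrow> nat \<Rightarrow> nat. \<forall>i j.
      (i < g \<and> j < k \<longrightarrow> P i j \<le> max m Z) \<and> (\<not> (i < g \<and> j < k) \<longrightarrow> P i j = 0)}"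
  have "pairs g k m Z \<subseteq> ?M \<times> ?M"
    by (auto simp: pairs_def le_max_iff_disj less_imp_le)
  then show ?thesis
    by (rule finite_subset) (intro finite_cartesian_product finite_bounded_matrices)
qed

lemma row_major_index_less:
  fixes i j g k :: nat
  assumes "i < g" and "j < k"
  shows "i * k + j < g * k"
proof -
  have "(i + 1) * k \<le> g * k"
    using assms(1) by (intro mult_le_mono1) simp
  then show ?thesis
    using assms(2) by simp
qed

definition in_prefix :: "nat \<Rightarrow> nat \<Rightarrow> nat \<Rightarrow> nat \<Rightarrow> nat \<Rightarrow> bool" where
  "in_prefix g k n i j \<longleftrightarrow> i < g \<and> j < k \<and> i * k + j < n"

lemma in_prefix_corners:
  assumes "in_prefix g k n i2 j2" and "i1 < i2" and "j1 < j2"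
  shows "in_prefix g k n i1 j1 \<and> in_prefix g k n i1 j2 \<and> in_prefix g k n i2 j1"
proof -
  have "(i1 + 1) * k \<le> i2 * k"
    using assms(2) by (intro mult_le_mono1) simp
  then show ?thesis
    using assms by (auto simp: in_prefix_def)
qed

lemma in_prefix_Suc:
  assumes "j < k"
  shows "in_prefix g k (Suc (i * k + j)) i' j' \<longleftrightarrow>
    in_prefix g k (i * k + j) i' j' \<or> (i' = i \<and> j' = j \<and> i < g)"
proof -
  have "i' = i \<and> j' = j" if "j' < k" and "i' * k + j' = i * k + j"
  proof -
    have "(i' * k + j') div k = (i * k + j) div k" "(i' * k + j') mod k = (i * k + j) mod k"
      using that(2) by simp_all
    then show ?thesis
      using that(1) assms by simp
  qed
  then show ?thesis
    using assms by (auto simp: in_prefix_def less_Suc_eq)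
qed

definition prefix_fillings :: "nat \<Rightarrow> nat \<Rightarrow> nat \<Rightarrow> nat \<Rightarrow> nat \<Rightarrow>
    ((nat \<Rightarrow> nat \<Rightarrow> nat) \<times> (nat \<Rightarrow> nat \<Rightarrow> nat)) set" where
  "prefix_fillings g k m Z n = {(P, L).
      (\<forall>i j. (in_prefix g k n i j \<longrightarrow> P i j \<le> m \<and> L i j < Z) \<and>
             (\<not> in_prefix g k n i j \<longrightarrow> P i j = 0 \<and> L i j = 0)) \<and>
      (\<forall>i1 i2 j1 j2. i1 < i2 \<and> j1 < j2 \<and> in_prefix g k n i2 j2 \<longrightarrow>
         \<not> active Z P L i1 i2 j1 j2)}"

lemma prefix_fillings_subset_pairs: "Z \<ge> 1 \<Longrightarrow> prefix_fillings g k m Z n \<subseteq> pairs g k m Z"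
  unfolding prefix_fillings_def pairs_def in_prefix_def by fastforce

lemma finite_prefix_fillings: "Z \<ge> 1 \<Longrightarrow> finite (prefix_fillings g k m Z n)"
  using finite_subset[OF prefix_fillings_subset_pairs finite_pairs] .

lemma prefix_fillings_0: "prefix_fillings g k m Z 0 = {(\<lambda>_ _. 0, \<lambda>_ _. 0)}"
  unfolding prefix_fillings_def in_prefix_def by (auto simp: fun_eq_iff)

lemma prefix_fillings_full_subset: "prefix_fillings g k m Z (g * k) \<subseteq> no_active_pairs g k m Z"
proof -
  have "in_prefix g k (g * k) i j \<longleftrightarrow> i < g \<and> j < k" for i j
    using row_major_index_less[of i g j k] by (auto simp: in_prefix_def)
  then show ?thesis
    unfolding prefix_fillings_def no_active_pairs_def pairs_def by auto
qed

definition admissible_entries :: "nat \<Rightarrow> nat \<Rightarrow> nat \<Rightarrow> nat \<Rightarrow>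
    (nat \<Rightarrow> nat \<Rightarrow> nat) \<Rightarrow> (nat \<Rightarrow> nat \<Rightarrow> nat) \<Rightarrow> (nat \<times> nat) set" where
  "admissible_entries m Z i j P L = {(a, b). a \<le> m \<and> b < Z \<and>
      (\<forall>i1<i. \<forall>j1<j. \<not> active Z (P(i := (P i)(j := a))) (L(i := (L i)(j := b))) i1 i j1 j)}"

lemma mod_add_left_cancel_less:
  fixes b b' :: nat
  assumes "(c + b) mod Z = (c + b') mod Z" and "b < Z" and "b' < Z"
  shows "b = b'"
  using assms cong_add_lcancel_nat[of c b b' Z] by (simp add: cong_def)

lemma card_active_completions_le_1:
  assumes "i1 \<noteq> i" and "j1 \<noteq> j"
  shows "card {(a, b). a \<le> m \<and> b < Z \<and>
    active Z (P(i := (P i)(j := a))) (L(i := (L i)(j := b))) i1 i j1 j} \<le> 1"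
    (is "card ?C \<le> 1")
proof -
  have completion: "P i1 j1 + a = P i1 j + P i j1 \<and> (L i1 j1 + b) mod Z = (L i1 j + L i j1) mod Z"
    if "active Z (P(i := (P i)(j := a))) (L(i := (L i)(j := b))) i1 i j1 j" for a b
    using that assms by (simp add: active_def)
  have "finite ?C"
    by (rule finite_subset[of _ "{..m} \<times> {..<Z}"]) auto
  moreover have "u = v" if "u \<in> ?C" and "v \<in> ?C" for u v
  proof -
    obtain a b a' b' where "u = (a, b)" "v = (a', b')"
      by fastforce
    with that have "b < Z" "b' < Z"
      and act: "active Z (P(i := (P i)(j := a))) (L(i := (L i)(j := b))) i1 i j1 j"
        "active Z (P(i := (P i)(j := a'))) (L(i := (L i)(j := b'))) i1 i j1 j"
      by simp_all
    from completion[OF act(1)] completion[OF act(2)]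
    have "a = a'" and "(L i1 j1 + b) mod Z = (L i1 j1 + b') mod Z"
      by simp_all
    with \<open>b < Z\<close> \<open>b' < Z\<close> \<open>u = (a, b)\<close> \<open>v = (a', b')\<close> show ?thesis
      using mod_add_left_cancel_less by blast
  qed
  ultimately show ?thesis
    using card_le_Suc0_iff_eq[of ?C] by auto
qed

lemma card_admissible_entries: "Z * (m + 1) - i * j \<le> card (admissible_entries m Z i j P L)"
proof -
  define forbidden where "forbidden = (\<lambda>(i1, j1). {(a, b). a \<le> m \<and> b < Z \<and>
    active Z (P(i := (P i)(j := a))) (L(i := (L i)(j := b))) i1 i j1 j})"
  let ?F = "\<Union>c\<in>{..<i} \<times> {..<j}. forbidden c"
  have "finite ?F"
    by (rule finite_subset[of _ "{..m} \<times> {..<Z}"]) (auto simp: forbidden_def)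
  have "card ?F \<le> (\<Sum>c\<in>{..<i} \<times> {..<j}. card (forbidden c))"
    by (rule card_UN_le) simp
  also have "\<dots> \<le> (\<Sum>c\<in>{..<i} \<times> {..<j}. 1)"
    using card_active_completions_le_1 by (intro sum_mono) (auto simp: forbidden_def)
  finally have "card ?F \<le> i * j"
    by simp
  moreover have "card ({..m} \<times> {..<Z}) = Z * (m + 1)"
    by simp
  ultimately have "Z * (m + 1) - i * j \<le> card ({..m} \<times> {..<Z}) - card ?F"
    by linarith
  also have "\<dots> \<le> card ({..m} \<times> {..<Z} - ?F)"
    using \<open>finite ?F\<close> by (rule diff_card_le_card_Diff)
  also have "{..m} \<times> {..<Z} - ?F = admissible_entries m Z i j P L"
    by (auto simp: admissible_entries_def forbidden_def)
  finally show ?thesis .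
qed

lemma extend_prefix_filling:
  assumes "i < g" and "j < k"
    and PL: "(P, L) \<in> prefix_fillings g k m Z (i * k + j)"
    and ab: "(a, b) \<in> admissible_entries m Z i j P L"
  shows "(P(i := (P i)(j := a)), L(i := (L i)(j := b))) \<in> prefix_fillings g k m Z (Suc (i * k + j))"
proof -
  let ?P = "P(i := (P i)(j := a))" and ?L = "L(i := (L i)(j := b))"
  let ?old = "in_prefix g k (i * k + j)" and ?new = "in_prefix g k (Suc (i * k + j))"
  have new_cells: "?new i' j' \<longleftrightarrow> ?old i' j' \<or> (i' = i \<and> j' = j)" for i' j'
    using in_prefix_Suc[OF \<open>j < k\<close>] \<open>i < g\<close> by blast
  have old_bounds: "P i' j' \<le> m \<and> L i' j' < Z" if "?old i' j'" for i' j'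
    using PL that by (simp add: prefix_fillings_def)
  have old_zeros: "P i' j' = 0 \<and> L i' j' = 0" if "\<not> ?old i' j'" for i' j'
    using PL that by (simp add: prefix_fillings_def)
  have old_inactive: "\<not> active Z P L i1 i2 j1 j2" if "i1 < i2" "j1 < j2" "?old i2 j2" for i1 i2 j1 j2
    using PL that by (simp add: prefix_fillings_def)
  have "\<not> ?old i j"
    by (simp add: in_prefix_def)
  have "\<not> active Z ?P ?L i1 i2 j1 j2" if "i1 < i2" and "j1 < j2" and "?new i2 j2" for i1 i2 j1 j2
  proof (cases "?old i2 j2")
    case True
    then have "?old i1 j1" "?old i1 j2" "?old i2 j1"
      using in_prefix_corners[OF True that(1,2)] by auto
    then have "(i1, j1) \<noteq> (i, j)" "(i1, j2) \<noteq> (i, j)" "(i2, j1) \<noteq> (i, j)" "(i2, j2) \<noteq> (i, j)"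
      using True \<open>\<not> ?old i j\<close> by auto
    then have "active Z ?P ?L i1 i2 j1 j2 \<longleftrightarrow> active Z P L i1 i2 j1 j2"
      unfolding active_def by auto
    with old_inactive[OF that(1,2) True] show ?thesis
      by simp
  next
    case False
    with that(3) new_cells have "i2 = i" "j2 = j"
      by auto
    with that(1,2) ab show ?thesis
      unfolding admissible_entries_def by blast
  qed
  moreover have "?P i' j' \<le> m \<and> ?L i' j' < Z" if "?new i' j'" for i' j'
    using that ab new_cells[of i' j'] old_bounds[of i' j'] by (auto simp: admissible_entries_def)
  moreover have "?P i' j' = 0 \<and> ?L i' j' = 0" if "\<not> ?new i' j'" for i' j'
    using that new_cells[of i' j'] old_zeros[of i' j'] by auto
  ultimately show ?thesis
    by (simp add: prefix_fillings_def)
qed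

lemma inj_on_extend_prefix_filling:
  "inj_on (\<lambda>((P, L), (a, b)). (P(i := (P i)(j := a)), L(i := (L i)(j := b))))
     (prefix_fillings g k m Z (i * k + j) \<times> UNIV)"
proof (rule inj_onI, clarsimp)
  fix P L a b P' L' a' b'
  assume PL: "(P, L) \<in> prefix_fillings g k m Z (i * k + j)"
    and PL': "(P', L') \<in> prefix_fillings g k m Z (i * k + j)"
    and eqP: "P(i := (P i)(j := a)) = P'(i := (P' i)(j := a'))"
    and eqL: "L(i := (L i)(j := b)) = L'(i := (L' i)(j := b'))"
  have "P i j = 0" "L i j = 0" "P' i j = 0" "L' i j = 0"
    using PL PL' by (auto simp: prefix_fillings_def in_prefix_def)
  moreover have "a = a'" "b = b'"
    using fun_cong[OF fun_cong[OF eqP, of i], of j] fun_cong[OF fun_cong[OF eqL, of i], of j] by simp_all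
  ultimately show "P = P' \<and> L = L' \<and> a = a' \<and> b = b'"
    using eqP eqL by (auto simp: fun_eq_iff split: if_splits) metis+
qed

lemma card_prefix_fillings_Suc:
  assumes "Z \<ge> 1" and "i < g" and "j < k"
  shows "card (prefix_fillings g k m Z (i * k + j)) * (Z * (m + 1) - i * j)
    \<le> card (prefix_fillings g k m Z (Suc (i * k + j)))"
proof -
  let ?S = "prefix_fillings g k m Z (i * k + j)"
  let ?A = "\<lambda>(P, L). admissible_entries m Z i j P L"
  let ?extend = "\<lambda>((P, L), (a, b)). (P(i := (P i)(j := a)), L(i := (L i)(j := b)))"
  have "finite (?A x)" for x
    by (rule finite_subset[of _ "{..m} \<times> {..<Z}"]) (auto simp: admissible_entries_def split: prod.splits)
  have "card ?S * (Z * (m + 1) - i * j) \<le> (\<Sum>x\<in>?S. card (?A x))"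
    using sum_bounded_below[of ?S "Z * (m + 1) - i * j" "\<lambda>x. card (?A x)"] card_admissible_entries
    by (simp split: prod.splits)
  also have "\<dots> = card (Sigma ?S ?A)"
    using finite_prefix_fillings[OF \<open>Z \<ge> 1\<close>] \<open>finite (?A _)\<close> by (simp add: card_SigmaI)
  also have "\<dots> = card (?extend ` Sigma ?S ?A)"
    by (rule card_image[symmetric], rule inj_on_subset[OF inj_on_extend_prefix_filling]) auto
  also have "\<dots> \<le> card (prefix_fillings g k m Z (Suc (i * k + j)))"
    using assms extend_prefix_filling
    by (intro card_mono finite_prefix_fillings) auto
  finally show ?thesis .
qed

lemma card_prefix_fillings_ge:
  assumes "Z \<ge> 1"
  shows "n \<le> g * k \<Longrightarrow>
    (\<Prod>n'<n. Z * (m + 1) - (n' div k) * (n' mod k)) \<le> card (prefix_fillings g k m Z n)"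
proof (induction n)
  case 0
  then show ?case
    by (simp add: prefix_fillings_0)
next
  case (Suc n)
  have "k > 0"
    using Suc.prems by (cases k) auto
  then have "n div k < g"
    using Suc.prems by (simp add: div_less_iff_less_mult)
  have "(\<Prod>n'<Suc n. Z * (m + 1) - (n' div k) * (n' mod k))
      \<le> card (prefix_fillings g k m Z n) * (Z * (m + 1) - (n div k) * (n mod k))"
    using Suc by (simp add: mult_le_mono1)
  also have "\<dots> \<le> card (prefix_fillings g k m Z (Suc n))"
    using card_prefix_fillings_Suc[OF assms \<open>n div k < g\<close>, where j = "n mod k" and k = k] \<open>k > 0\<close>
    by simp
  finally show ?case .
qed

lemma bij_betw_div_mod:
  assumes "k > 0"
  shows "bij_betw (\<lambda>n. (n div k, n mod k)) {..<g * k} ({..<g} \<times> {..<(k :: nat)})"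
proof (rule bij_betw_byWitness[where f' = "\<lambda>(i, j). i * k + j"])
  show "(\<lambda>n. (n div k, n mod k)) ` {..<g * k} \<subseteq> {..<g} \<times> {..<k}"
    using assms by (auto simp: div_less_iff_less_mult)
  show "(\<lambda>(i, j). i * k + j) ` ({..<g} \<times> {..<k}) \<subseteq> {..<g * k}"
    using row_major_index_less by auto
qed auto

lemma card_no_active_pairs_ge:
  assumes "Z \<ge> 1"
  shows "(\<Prod>i<g. \<Prod>j<k. Z * (m + 1) - i * j) \<le> card (no_active_pairs g k m Z)"
proof -
  have "(\<Prod>i<g. \<Prod>j<k. Z * (m + 1) - i * j) = (\<Prod>n<g * k. Z * (m + 1) - (n div k) * (n mod k))"
  proof (cases "k = 0")
    case False
    then show ?thesis
      using prod.reindex_bij_betw[OF bij_betw_div_mod, where g = "\<lambda>(i, j). Z * (m + 1) - i * j"]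
      by (simp add: prod.cartesian_product)
  qed simp
  also have "\<dots> \<le> card (prefix_fillings g k m Z (g * k))"
    using card_prefix_fillings_ge[OF assms] by simp
  also have "\<dots> \<le> card (no_active_pairs g k m Z)"
    using prefix_fillings_full_subset finite_pairs
    by (intro card_mono) (auto simp: no_active_pairs_def intro: finite_subset)
  finally show ?thesis .
qed

lemma card_le_card_quotient_mult:
  assumes "finite (R `` A)" and "\<And>x. x \<in> A \<Longrightarrow> (x, x) \<in> R"
    and "\<And>x. x \<in> A \<Longrightarrow> card (R `` {x}) \<le> c"
  shows "card A \<le> card (A // R) * c"
proof -
  have "\<Union> (A // R) = R `` A"
    by (auto simp: quotient_def)
  moreover have "A \<subseteq> R `` A"
    using assms(2) by blast
  ultimately have "card A \<le> card (\<Union> (A // R))"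
    using assms(1) by (simp add: card_mono)
  also have "\<dots> \<le> (\<Sum>C\<in>A // R. card C)"
    by (rule card_Union_le_sum_card)
  also have "\<dots> \<le> card (A // R) * c"
  proof -
    have "card C \<le> c" if "C \<in> A // R" for C
      using that assms(3) by (auto elim: quotientE)
    then show ?thesis
      using sum_bounded_above[of "A // R" card c] by simp
  qed
  finally show ?thesis .
qed

lemma card_pair_equiv_class_le: "card (pair_equiv g k m Z `` {(P, L)}) \<le> fact g * fact k"
proof -
  define Perms where "Perms = {pr. pr permutes {..<g}} \<times> {pc. pc permutes {..<k}}"
  define permute where "permute = (\<lambda>(pr :: nat \<Rightarrow> nat, pc :: nat \<Rightarrow> nat).
     ((\<lambda>a b. if a < g \<and> b < k then P (inv pr a) (inv pc b) else 0),
      (\<lambda>a b. if a < g \<and> b < k then L (inv pr a) (inv pc b) else 0)))"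
  have "pair_equiv g k m Z `` {(P, L)} \<subseteq> permute ` Perms"
  proof
    fix y
    assume "y \<in> pair_equiv g k m Z `` {(P, L)}"
    then obtain P' L' pr pc where y: "y = (P', L')" and "(P', L') \<in> pairs g k m Z"
      and pr: "pr permutes {..<g}" and pc: "pc permutes {..<k}"
      and moved: "\<forall>i<g. \<forall>j<k. P' (pr i) (pc j) = P i j \<and> L' (pr i) (pc j) = L i j"
      unfolding pair_equiv_def by auto
    then have outside: "\<not> (a < g \<and> b < k) \<Longrightarrow> P' a b = 0 \<and> L' a b = 0" for a b
      by (auto simp: pairs_def)
    have "a < g \<Longrightarrow> inv pr a < g \<and> pr (inv pr a) = a" for a
      using pr by (metis lessThan_iff permutes_inverses(1) permutes_inv permutes_in_image)
    moreover have "b < k \<Longrightarrow> inv pc b < k \<and> pc (inv pc b) = b" for b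
      using pc by (metis lessThan_iff permutes_inverses(1) permutes_inv permutes_in_image)
    ultimately have "y = permute (pr, pc)"
      unfolding y permute_def using moved outside by (auto simp: fun_eq_iff) metis+
    moreover have "(pr, pc) \<in> Perms"
      unfolding Perms_def using pr pc by simp
    ultimately show "y \<in> permute ` Perms"
      by blast
  qed
  moreover have "finite Perms" and "card Perms = fact g * fact k"
    unfolding Perms_def by (simp_all add: finite_permutations card_cartesian_product card_permutations)
  ultimately show ?thesis
    by (metis card_image_le card_mono finite_imageI le_trans)
qed

lemma card_no_active_pairs_le: "card (no_active_pairs g k m Z) \<le> N_N g k m Z * (fact g * fact k)"
  unfolding N_N_def
proof (rule card_le_card_quotient_mult)
  show "finite (pair_equiv g k m Z `` no_active_pairs g k m Z)"
    by (rule finite_subset[OF _ finite_pairs]) (auto simp: pair_equiv_def)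
  show "(x, x) \<in> pair_equiv g k m Z" if "x \<in> no_active_pairs g k m Z" for x
    using that by (auto simp: no_active_pairs_def pair_equiv_def intro!: exI[of _ id] permutes_id)
  show "card (pair_equiv g k m Z `` {x}) \<le> fact g * fact k" for x
    using card_pair_equiv_class_le by (metis prod.collapse)
qed

lemma N_N_ge_prod:
  assumes "Z \<ge> 1"
    and "\<And>i j. i < g \<Longrightarrow> j < k \<Longrightarrow> 0 \<le> f i j \<and> f i j \<le> real Z * (real m + 1) - real i * real j"
  shows "(\<Prod>i<g. \<Prod>j<k. f i j) / (fact g * fact k) \<le> real (N_N g k m Z)"
proof -
  have "f i j \<le> real (Z * (m + 1) - i * j)" if "i < g" "j < k" for i j
  proof -
    have "real i * real j \<le> real Z * (real m + 1)"
      using assms(2)[OF that] by linarith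
    then have "real (i * j) \<le> real (Z * (m + 1))"
      by (simp only: of_nat_mult of_nat_add of_nat_1)
    then have "i * j \<le> Z * (m + 1)"
      by (simp only: of_nat_le_iff)
    then have "real (Z * (m + 1) - i * j) = real Z * (real m + 1) - real i * real j"
      by (simp only: of_nat_diff of_nat_mult of_nat_add of_nat_1)
    then show ?thesis
      using assms(2)[OF that] by (simp only:)
  qed
  then have "(\<Prod>i<g. \<Prod>j<k. f i j) \<le> (\<Prod>i<g. \<Prod>j<k. real (Z * (m + 1) - i * j))"
    using assms(2) by (intro prod_mono conjI prod_nonneg) auto
  also have "\<dots> = real (\<Prod>i<g. \<Prod>j<k. Z * (m + 1) - i * j)"
    by simp
  also have "\<dots> \<le> real (N_N g k m Z * (fact g * fact k))"
    using order_trans[OF card_no_active_pairs_ge[OF assms(1)] card_no_active_pairs_le]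
    by (simp only: of_nat_le_iff)
  also have "\<dots> = real (N_N g k m Z) * (fact g * fact k)"
    by (simp only: of_nat_mult of_nat_fact)
  finally show ?thesis
    by (simp add: divide_le_eq)
qed

lemma sum_lessThan_eq_choose_two: "(\<Sum>i<n. i) = n choose 2"
  by (induction n) (simp_all add: numeral_2_eq_2)

lemma one_minus_power_mult_le_diff:
  fixes y N :: real
  assumes "0 < y" and "y \<le> 1" and "1 \<le> y * (N - real t)"
  shows "N * (1 - y) ^ t \<le> N - real t"
proof -
  have "0 \<le> (1 - y) ^ t"
    using assms(2) by simp
  have "0 < y * (N - real t)"
    using assms(3) by linarith
  then have "0 \<le> N - real t"
    using assms(1) by (simp add: zero_less_mult_iff)
  have "1 + real t * y \<le> (1 + y) ^ t"
    by (rule Bernoulli_inequality) (use assms(1) in linarith)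
  then have "(1 - y) ^ t * (1 + real t * y) \<le> (1 - y) ^ t * (1 + y) ^ t"
    using \<open>0 \<le> (1 - y) ^ t\<close> by (rule mult_left_mono)
  also have "\<dots> = (1 - y\<^sup>2) ^ t"
    by (simp add: power_mult_distrib[symmetric] power2_eq_square algebra_simps)
  also have "\<dots> \<le> 1"
    using assms(1,2) by (intro power_le_one) (auto simp: power2_eq_square mult_le_one)
  finally have "(1 - y) ^ t * (1 + real t * y) \<le> 1" .
  have "N \<le> (N - real t) * (1 + real t * y)"
    using mult_left_mono[OF assms(3), of "real t"] by (simp add: algebra_simps)
  then have "N * (1 - y) ^ t \<le> (N - real t) * (1 + real t * y) * (1 - y) ^ t"
    using \<open>0 \<le> (1 - y) ^ t\<close> by (rule mult_right_mono)
  also have "\<dots> = (N - real t) * ((1 - y) ^ t * (1 + real t * y))"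
    by (simp only: mult_ac)
  also have "\<dots> \<le> N - real t"
    using mult_left_mono[OF \<open>(1 - y) ^ t * (1 + real t * y) \<le> 1\<close> \<open>0 \<le> N - real t\<close>] by simp
  finally show ?thesis .
qed

lemma mult_one_minus_two_div_power_le_diff:
  fixes N :: real and D t :: nat
  assumes "3 \<le> D" and "6 * t \<le> 5 * D" and "4 * real D \<le> 3 * N"
  shows "N * (1 - 2 / real D) ^ t \<le> N - real t"
proof -
  have "3 \<le> real D"
    using assms(1) by simp
  then have "0 < 2 / real D" and "2 / real D \<le> 1" and "2 / real D * (real D / 2) = 1"
    by (simp_all add: divide_le_eq)
  have "real (6 * t) \<le> real (5 * D)"
    using assms(2) by (simp only: of_nat_le_iff)
  then have "real D / 2 \<le> N - real t"
    using assms(3) by simp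
  then have "2 / real D * (real D / 2) \<le> 2 / real D * (N - real t)"
    using \<open>0 < 2 / real D\<close> by (simp add: mult_left_mono)
  then have "1 \<le> 2 / real D * (N - real t)"
    by (simp only: \<open>2 / real D * (real D / 2) = 1\<close>)
  with \<open>0 < 2 / real D\<close> \<open>2 / real D \<le> 1\<close> show ?thesis
    by (rule one_minus_power_mult_le_diff)
qed

lemma power_pred_div_power_le:
  assumes "2 \<le> D"
  shows "(real D - 1) ^ (D - 1) / real D ^ D \<le> 1 / (2 * real D)"
proof -
  define n where "n = D - 1"
  have D: "D = Suc n" and "1 \<le> real n"
    using assms by (auto simp: n_def)
  have "1 + real n * (1 / real n) \<le> (1 + 1 / real n) ^ n"
    by (rule Bernoulli_inequality) (use divide_nonneg_nonneg[of 1 "real n"] in linarith)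
  then have "2 \<le> (1 + 1 / real n) ^ n"
    using \<open>1 \<le> real n\<close> by simp
  then have "2 * real n ^ n \<le> (1 + 1 / real n) ^ n * real n ^ n"
    by (simp add: mult_right_mono)
  also have "\<dots> = real D ^ n"
    using \<open>1 \<le> real n\<close> by (simp add: D power_mult_distrib[symmetric] field_simps)
  finally have "real n ^ n \<le> real D ^ n / 2"
    by simp
  have "(real D - 1) ^ (D - 1) / real D ^ D = real n ^ n / (real D * real D ^ n)"
    by (simp add: D)
  also have "\<dots> \<le> (real D ^ n / 2) / (real D * real D ^ n)"
    using \<open>real n ^ n \<le> real D ^ n / 2\<close> by (rule divide_right_mono) simp
  also have "\<dots> = 1 / (2 * real D)"
    by (simp add: D)
  finally show ?thesis .
qed

lemma spreading_degree_bounds: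
  fixes g k :: nat
  assumes "2 \<le> g" and "2 \<le> k" and "g + k < g * k"
  shows "3 \<le> (2 * g - 3) * (2 * k - 3)" and "6 * ((g - 1) * (k - 1)) \<le> 5 * ((2 * g - 3) * (2 * k - 3))"
proof -
  define a b where "a = g - 2" and "b = k - 2"
  have g: "g = a + 2" and k: "k = b + 2"
    using assms(1,2) by (simp_all add: a_def b_def)
  have "1 \<le> a + b"
  proof (rule ccontr)
    assume "\<not> 1 \<le> a + b"
    then show False
      using assms(3) by (simp add: g k)
  qed
  have D: "(2 * g - 3) * (2 * k - 3) = 4 * (a * b) + 2 * (a + b) + 1"
    by (simp add: g k algebra_simps)
  have T: "(g - 1) * (k - 1) = a * b + (a + b) + 1"
    by (simp add: g k algebra_simps)
  have "3 \<le> 4 * p + 2 * (a + b) + 1" for p :: nat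
    using \<open>1 \<le> a + b\<close> by presburger
  then show "3 \<le> (2 * g - 3) * (2 * k - 3)"
    unfolding D .
  have "6 * (p + (a + b) + 1) \<le> 5 * (4 * p + 2 * (a + b) + 1)" for p :: nat
    using \<open>1 \<le> a + b\<close> by presburger
  then show "6 * ((g - 1) * (k - 1)) \<le> 5 * ((2 * g - 3) * (2 * k - 3))"
    unfolding D T .
qed

lemma N_N_ge_geometric_bound:
  assumes "Z \<ge> 1" and "2 \<le> g" and "2 \<le> k" and "g + k < g * k"
    and large: "4 * real ((2 * g - 3) * (2 * k - 3)) \<le> 3 * (real Z * (real m + 1))"
  shows "(real Z * (real m + 1)) ^ (g * k) * (1 - 2 / real ((2 * g - 3) * (2 * k - 3))) ^ ((g choose 2) * (k choose 2))
      / (fact g * fact k) \<le> real (N_N g k m Z)"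
proof -
  define D where "D = (2 * g - 3) * (2 * k - 3)"
  define N where "N = real Z * (real m + 1)"
  define q where "q = 1 - 2 / real D"
  have "3 \<le> D" and T_le: "6 * ((g - 1) * (k - 1)) \<le> 5 * D"
    using spreading_degree_bounds[OF assms(2-4)] by (simp_all add: D_def)
  have "4 * real D \<le> 3 * N"
    using large by (simp only: D_def N_def)
  have "0 \<le> N" and "0 \<le> q"
    using \<open>3 \<le> D\<close> by (simp_all add: N_def q_def divide_le_eq)
  have factor: "0 \<le> N * q ^ (i * j) \<and> N * q ^ (i * j) \<le> real Z * (real m + 1) - real i * real j"
    if "i < g" and "j < k" for i j
  proof
    have "i * j \<le> (g - 1) * (k - 1)"
      using that by (intro mult_le_mono) auto
    then have "6 * (i * j) \<le> 5 * D"
      using T_le by linarith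
    with \<open>3 \<le> D\<close> have "N * q ^ (i * j) \<le> N - real (i * j)"
      unfolding q_def using \<open>4 * real D \<le> 3 * N\<close> by (rule mult_one_minus_two_div_power_le_diff)
    then show "N * q ^ (i * j) \<le> real Z * (real m + 1) - real i * real j"
      by (simp only: of_nat_mult N_def)
    show "0 \<le> N * q ^ (i * j)"
      using \<open>0 \<le> N\<close> \<open>0 \<le> q\<close> by simp
  qed
  have "(\<Prod>i<g. \<Prod>j<k. N * q ^ (i * j)) = (\<Prod>i<g. N ^ k * q ^ (\<Sum>j<k. i * j))"
    by (simp only: prod.distrib prod_constant card_lessThan power_sum)
  also have "\<dots> = N ^ (g * k) * q ^ (\<Sum>i<g. \<Sum>j<k. i * j)"
    by (simp only: prod.distrib prod_constant card_lessThan power_sum power_mult mult.commute[of g k])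
  also have "(\<Sum>i<g. \<Sum>j<k. i * j) = (g choose 2) * (k choose 2)"
    by (simp only: sum_product[symmetric] sum_lessThan_eq_choose_two)
  finally have product: "(\<Prod>i<g. \<Prod>j<k. N * q ^ (i * j)) = N ^ (g * k) * q ^ ((g choose 2) * (k choose 2))" .
  have "(\<Prod>i<g. \<Prod>j<k. N * q ^ (i * j)) / (fact g * fact k) \<le> real (N_N g k m Z)"
    by (rule N_N_ge_prod[where f = "\<lambda>i j. N * q ^ (i * j)", OF assms(1) factor])
  then show ?thesis
    unfolding product by (simp only: D_def N_def q_def)
qed

lemma N_N_ge_uniform_bound:
  assumes "Z \<ge> 1" and "g + k < g * k"
    and large: "4 * (real g * real k - real g - real k) \<le> real Z * (real m + 1)"
  shows "(real Z * (real m + 1)) ^ (g * k) *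
      (1 - (real g * real k - real g - real k + 1) / (4 * (real g * real k - real g - real k))) ^ (g * k)
      / (fact g * fact k) \<le> real (N_N g k m Z)"
proof -
  define s where "s = real g * real k - real g - real k"
  define c where "c = 1 - (s + 1) / (4 * s)"
  define N where "N = real Z * (real m + 1)"
  have "g + k + 1 \<le> g * k"
    using assms(2) by simp
  then have "real (g + k + 1) \<le> real (g * k)"
    by (simp only: of_nat_le_iff)
  then have "1 \<le> s"
    by (simp add: s_def)
  have "4 * s \<le> N"
    using large by (simp only: s_def N_def)
  have factor: "0 \<le> N * c \<and> N * c \<le> real Z * (real m + 1) - real i * real j" if "i < g" and "j < k" for i j
  proof
    have "real i * real j \<le> (real g - 1) * (real k - 1)"
      using that by (intro mult_mono) auto
    also have "\<dots> = s + 1"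
      by (simp add: s_def algebra_simps)
    also have "\<dots> \<le> (s + 1) * (N / (4 * s))"
      using \<open>4 * s \<le> N\<close> \<open>1 \<le> s\<close> by (simp add: le_divide_eq)
    finally have "N * c \<le> N - real i * real j"
      by (simp add: c_def algebra_simps)
    then show "N * c \<le> real Z * (real m + 1) - real i * real j"
      by (simp only: N_def)
    have "(s + 1) / (4 * s) \<le> 1"
      using \<open>1 \<le> s\<close> by (simp add: divide_le_eq)
    then show "0 \<le> N * c"
      by (simp add: N_def c_def)
  qed
  have product: "(\<Prod>i<g. \<Prod>j<k. N * c) = N ^ (g * k) * c ^ (g * k)"
    by (simp only: prod_constant card_lessThan power_mult_distrib power_mult mult.commute[of g k])
  have "(\<Prod>i<g. \<Prod>j<k. N * c) / (fact g * fact k) \<le> real (N_N g k m Z)"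
    by (rule N_N_ge_prod[where f = "\<lambda>_ _. N * c", OF assms(1) factor])
  then show ?thesis
    unfolding product by (simp only: N_def c_def s_def)
qed

lemma large_size_of_geometric_condition:
  assumes "3 \<le> D" and "0 < N"
    and "2 / (3 * N) \<le> (real D - 1) ^ (D - 1) / real D ^ D"
  shows "4 * real D \<le> 3 * N"
proof -
  have "2 / (3 * N) \<le> 1 / (2 * real D)"
    using assms(3) power_pred_div_power_le[of D] \<open>3 \<le> D\<close> by simp
  with assms(1,2) show ?thesis
    by (simp add: field_simps)
qed

lemma large_size_of_uniform_condition:
  fixes g k :: nat
  assumes "g + k < g * k" and "0 < N"
    and "2 / (3 * N) \<le> 27 / (256 * (real g * real k - real g - real k))"
  shows "4 * (real g * real k - real g - real k) \<le> N"
proof -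
  define s where "s = real g * real k - real g - real k"
  have "real (g + k) < real (g * k)"
    using assms(1) by (simp only: of_nat_less_iff)
  then have "0 < s"
    by (simp add: s_def)
  with assms(2,3) have "512 * s \<le> 81 * N"
    by (simp add: s_def field_simps)
  with \<open>0 < s\<close> show ?thesis
    unfolding s_def[symmetric] by linarith
qed

lemma inverse_le_activation_probability:
  assumes "Z \<ge> 1"
  shows "2 / (3 * (real Z * (real m + 1))) \<le> (2 * real m ^ 2 + 4 * real m + 3) / (3 * (real m + 1) ^ 3 * real Z)"
proof -
  have "real Z \<noteq> 0" and "real m + 1 \<noteq> 0"
    using assms by simp_all
  then have "2 / (3 * (real Z * (real m + 1))) = 2 * (real m + 1) ^ 2 / (3 * (real m + 1) ^ 3 * real Z)"
    by (simp add: divide_simps power2_eq_square power3_eq_cube)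
  also have "\<dots> \<le> (2 * real m ^ 2 + 4 * real m + 3) / (3 * (real m + 1) ^ 3 * real Z)"
    by (rule divide_right_mono) (simp_all add: power2_eq_square algebra_simps)
  finally show ?thesis .
qed

theorem corollary2:
  fixes m Z g k :: nat
  assumes "Z \<ge> 1" and "g \<ge> 2" and "k \<ge> 2" and "g * k > g + k"
  defines "D \<equiv> (2 * g - 3) * (2 * k - 3)"
  defines "I \<equiv> (real D - 1) ^ (D - 1) / real D ^ D"
  defines "II \<equiv> 27 / (256 * (real g * real k - real g - real k))"
  assumes "(2 * real m ^ 2 + 4 * real m + 3) / (3 * (real m + 1) ^ 3 * real Z) \<le> max I II"
  shows "real (N_N g k m Z) \<ge>
    (if I > II then
       (real Z * (real m + 1)) ^ (g * k) * (1 - 2 / real D) ^ ((g choose 2) * (k choose 2))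
         / (fact g * fact k)
     else
       (real Z * (real m + 1)) ^ (g * k) *
         (1 - (real g * real k - real g - real k + 1) / (4 * (real g * real k - real g - real k))) ^ (g * k)
         / (fact g * fact k))"
proof -
  let ?N = "real Z * (real m + 1)"
  have "0 < ?N"
    using assms(1) by (simp add: add_pos_nonneg)
  have "2 / (3 * ?N) \<le> max I II"
    using inverse_le_activation_probability[OF assms(1)] assms(8) by (rule order_trans)
  show ?thesis
  proof (cases "I > II")
    case True
    with \<open>2 / (3 * ?N) \<le> max I II\<close> have "2 / (3 * ?N) \<le> I"
      by simp
    moreover have "3 \<le> D"
      using spreading_degree_bounds(1)[OF assms(2-4)] by (simp add: D_def)
    ultimately have "4 * real D \<le> 3 * ?N"
      using large_size_of_geometric_condition \<open>0 < ?N\<close> unfolding I_def by blast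
    with True show ?thesis
      using N_N_ge_geometric_bound[OF assms(1-4)] by (simp add: D_def)
  next
    case False
    with \<open>2 / (3 * ?N) \<le> max I II\<close> have "2 / (3 * ?N) \<le> II"
      by simp
    then have "4 * (real g * real k - real g - real k) \<le> ?N"
      using large_size_of_uniform_condition[OF assms(4) \<open>0 < ?N\<close>] unfolding II_def by blast
    with False show ?thesis
      using N_N_ge_uniform_bound[OF assms(1,4)] by simp
  qed
qed

end
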